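(* Let $\varphi:[0,\infty)\to(0,\infty)$ be continuous, strictly increasing, with $\varphi(x)\to\infty$ as $x\to\infty$, and rapidly growing: there exist $\varepsilon>0$ and $A>0$ such that $\varphi(x)/x^{1+\varepsilon}$ is increasing on $[A,\infty)$. Let $W(x)=\exp(\varphi(|x|))$ and $A_n=\varphi^{-1}(n)$. Then for all sufficiently large $n\in\mathbb N$, $$\sup_{x\ge A_n}\frac{|T_n(x/A_n)|}{W(x)}\le\frac{2^n}{e^n},$$ where $T_n$ is the Tchebyshev polynomial of the first kind of degree $n$.
   Context: $T_n(x)=\frac12\left((x+\sqrt{x^2-1})^n+(x-\sqrt{x^2-1})^n\right)$. *)

theory Defs
  imports "HOL-Analysis.Analysis"
begin

fun cheb_T :: "nat \<Rightarrow> real \<Rightarrow> real" where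
  "cheb_T 0 x = 1"
| "cheb_T (Suc 0) x = x"
| "cheb_T (Suc (Suc n)) x = 2 * x * cheb_T (Suc n) x - cheb_T n x"

definition phi_inv :: "(real \<Rightarrow> real) \<Rightarrow> real \<Rightarrow> real" where
  "phi_inv \<phi> y = (THE x. 0 \<le> x \<and> \<phi> x = y)"

end

theory Submission
  imports Defs
begin

(* Put a = A_n and t = x / a >= 1. On [1, oo) the recurrence gives 1 <= T_n(t) <= (2t)^n.
   Since phi(x) / x^(1+eps) increases and phi(a) = n, we get phi(x) >= n t, so the quotient
   is at most (2t)^n e^(-nt) = 2^n e^(-n) (t e^(1-t))^n, and t e^(1-t) <= 1 because
   t <= e^(t-1). *)

lemma cheb_T_ge_one_and_mono:
  assumes "t \<ge> 1"
  shows "1 \<le> cheb_T n t \<and> cheb_T n t \<le> cheb_T (Suc n) t"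
proof (induction n)
  case 0
  then show ?case using assms by simp
next
  case (Suc n)
  have "2 * cheb_T (Suc n) t \<le> 2 * t * cheb_T (Suc n) t"
    using Suc assms by (intro mult_right_mono) auto
  moreover have "cheb_T (Suc (Suc n)) t = 2 * t * cheb_T (Suc n) t - cheb_T n t" by simp
  ultimately show ?case using Suc by linarith
qed

lemma cheb_T_Suc_le:
  assumes "t \<ge> 1"
  shows "cheb_T (Suc n) t \<le> 2 * t * cheb_T n t"
proof (cases n)
  case 0
  then show ?thesis using assms by simp
next
  case (Suc m)
  then show ?thesis using cheb_T_ge_one_and_mono[OF assms, of m] by simp
qed

lemma abs_cheb_T_le_power:
  assumes "t \<ge> 1"
  shows "\<bar>cheb_T n t\<bar> \<le> (2 * t) ^ n"
proof -
  have "cheb_T n t \<le> (2 * t) ^ n"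
  proof (induction n)
    case 0
    then show ?case by simp
  next
    case (Suc n)
    have "cheb_T (Suc n) t \<le> 2 * t * cheb_T n t" by (rule cheb_T_Suc_le[OF assms])
    also have "\<dots> \<le> 2 * t * (2 * t) ^ n" using Suc assms by (intro mult_left_mono) auto
    finally show ?case by simp
  qed
  then show ?thesis using cheb_T_ge_one_and_mono[OF assms, of n] by simp
qed

lemma power_le_exp_mult_minus_one:
  fixes t :: real
  assumes "t \<ge> 0"
  shows "t ^ n \<le> exp (real n * (t - 1))"
proof -
  have "t ^ n \<le> exp (t - 1) ^ n"
    using assms exp_ge_add_one_self[of "t - 1"] by (intro power_mono) auto
  then show ?thesis by (simp add: exp_of_nat_mult)
qed

lemma scaled_power_div_exp_le:
  fixes c t :: real
  assumes "c \<ge> 0" "t \<ge> 0"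
  shows "(c * t) ^ n / exp (real n * t) \<le> c ^ n / exp (real n)"
proof -
  have "(c * t) ^ n \<le> c ^ n * exp (real n * (t - 1))"
    unfolding power_mult_distrib
    using assms power_le_exp_mult_minus_one[of t n] by (intro mult_left_mono) auto
  also have "\<dots> = c ^ n / exp (real n) * exp (real n * t)"
    by (simp add: right_diff_distrib exp_diff)
  finally show ?thesis by (simp add: divide_le_eq)
qed

lemma phi_inv_eqI:
  assumes "strict_mono_on {0..} \<phi>" "0 \<le> x" "\<phi> x = y"
  shows "phi_inv \<phi> y = x"
  unfolding phi_inv_def
proof (rule the_equality)
  show "0 \<le> x \<and> \<phi> x = y" using assms by simp
  show "z = x" if "0 \<le> z \<and> \<phi> z = y" for z
    using strict_mono_on_eqD[OF assms(1), of x z] assms that by simp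
qed

lemma phi_inv_nonneg_inverse:
  fixes \<phi> :: "real \<Rightarrow> real"
  assumes "continuous_on {0..} \<phi>" "strict_mono_on {0..} \<phi>" "filterlim \<phi> at_top at_top"
    and "\<phi> 0 \<le> y"
  shows "0 \<le> phi_inv \<phi> y" "\<phi> (phi_inv \<phi> y) = y"
proof -
  obtain b where b: "b \<ge> 0" "\<phi> b \<ge> y"
    using assms(3) unfolding filterlim_at_top eventually_at_top_linorder
    by (metis max.cobounded1 max.cobounded2)
  have "continuous_on {0..b} \<phi>" using assms(1) by (rule continuous_on_subset) auto
  then obtain x where x: "0 \<le> x" "\<phi> x = y"
    using IVT'[of \<phi> 0 y b] assms(4) b by auto
  then show "0 \<le> phi_inv \<phi> y" "\<phi> (phi_inv \<phi> y) = y"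
    using phi_inv_eqI[OF assms(2) x] by simp_all
qed

lemma mono_on_div_powr_imp_linear_growth:
  fixes \<phi> :: "real \<Rightarrow> real"
  assumes "mono_on {A..} (\<lambda>x. \<phi> x / x powr (1 + \<epsilon>))" "\<epsilon> \<ge> 0"
    and "0 < a" "A \<le> a" "a \<le> x" "0 \<le> \<phi> a"
  shows "\<phi> a * (x / a) \<le> \<phi> x"
proof -
  have x: "0 < x" "1 \<le> x / a" using assms by auto
  have "\<phi> a * (x / a) \<le> \<phi> a * (x / a) powr (1 + \<epsilon>)"
    using x assms powr_mono[of 1 "1 + \<epsilon>" "x / a"] by (intro mult_left_mono) auto
  also have "\<dots> = \<phi> a / a powr (1 + \<epsilon>) * x powr (1 + \<epsilon>)"
    using x assms by (simp add: powr_divide)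
  also have "\<dots> \<le> \<phi> x / x powr (1 + \<epsilon>) * x powr (1 + \<epsilon>)"
    using mono_onD[OF assms(1), of a x] assms x by (intro mult_right_mono) auto
  also have "\<dots> = \<phi> x" using x by simp
  finally show ?thesis .
qed

theorem lemma2:
  fixes \<phi> :: "real \<Rightarrow> real"
  assumes cont: "continuous_on {0..} \<phi>"
    and pos: "\<forall>x\<ge>0. \<phi> x > 0"
    and incr: "strict_mono_on {0..} \<phi>"
    and lim: "filterlim \<phi> at_top at_top"
    and rapid: "\<exists>\<epsilon>>0. \<exists>A>0. mono_on {A..} (\<lambda>x. \<phi> x / x powr (1 + \<epsilon>))"
  shows "\<forall>\<^sub>F n in sequentially.
           \<forall>x \<ge> phi_inv \<phi> (real n).
             \<bar>cheb_T n (x / phi_inv \<phi> (real n))\<bar> / exp (\<phi> \<bar>x\<bar>) \<le> 2 ^ n / exp (real n)"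
proof -
  obtain \<epsilon> A where "\<epsilon> > 0" "A > 0" and rapid: "mono_on {A..} (\<lambda>x. \<phi> x / x powr (1 + \<epsilon>))"
    using rapid by blast
  have "\<forall>\<^sub>F n in sequentially. nat \<lceil>max (\<phi> 0) (\<phi> A)\<rceil> < n" by (rule eventually_gt_at_top)
  then show ?thesis
  proof (rule eventually_mono, intro allI impI)
    fix n x
    assume "nat \<lceil>max (\<phi> 0) (\<phi> A)\<rceil> < n" and x: "phi_inv \<phi> (real n) \<le> x"
    then have n: "\<phi> 0 < real n" "\<phi> A < real n" by linarith+
    define a where "a = phi_inv \<phi> (real n)"
    have a: "0 \<le> a" "\<phi> a = real n"
      using phi_inv_nonneg_inverse[OF cont incr lim] n(1) unfolding a_def by auto
    have "A < a" using strict_mono_on_less[OF incr, of A a] n(2) a \<open>A > 0\<close> by simp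
    define t where "t = x / a"
    have t: "1 \<le> t" and "0 < x" using x \<open>A < a\<close> \<open>A > 0\<close> by (auto simp: t_def a_def)
    have "real n * t \<le> \<phi> x"
      using mono_on_div_powr_imp_linear_growth[OF rapid, of a x] \<open>\<epsilon> > 0\<close> \<open>A < a\<close> \<open>A > 0\<close> x a
      by (simp add: t_def a_def)
    then have "\<bar>cheb_T n t\<bar> / exp (\<phi> \<bar>x\<bar>) \<le> (2 * t) ^ n / exp (real n * t)"
      using abs_cheb_T_le_power[OF t] \<open>0 < x\<close> t by (intro frac_le) auto
    also have "\<dots> \<le> 2 ^ n / exp (real n)"
      using t by (intro scaled_power_div_exp_le) auto
    finally show "\<bar>cheb_T n (x / phi_inv \<phi> (real n))\<bar> / exp (\<phi> \<bar>x\<bar>) \<le> 2 ^ n / exp (real n)"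
      by (simp add: t_def a_def)
  qed
qed

end
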